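(* Let $P$ be a classifier on $\mathbb{R}^n$ and $x \in \mathbb{R}^n$ such that the coverage of $P$ at $x$ is infinite. Then $P(x)$ contains an open halfspace $H$ with $x \in \mathrm{bd}(H)$.
   Context: A classifier is a partition $P$ of $\mathbb{R}^n$ together with a distinguished member $R \in P$, the refinement set, which may be empty and which is both meagre and Lebesgue null; the label set is $L_P = P \setminus\{R\}$. For $x \in \mathbb{R}^n$, $P(x)$ denotes the member of $P$ containing $x$. An anchor for $x$ is an open ball $A = B(c,r)$ with $x \in A \subseteq P(x)$, and its coverage is its radius $r$. The coverage of $P$ at $x$ is infinite if there exists a sequence of anchors for $x$ whose radii are unbounded. $\mathrm{bd}(X)$ denotes the topological boundary of $X$. *)

theory Defs
  imports "HOL-Analysis.Analysis"
begin

definition nowhere_dense :: "'a::topological_space set \<Rightarrow> bool" where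
  "nowhere_dense S \<longleftrightarrow> interior (closure S) = {}"

definition meagre :: "'a::topological_space set \<Rightarrow> bool" where
  "meagre S \<longleftrightarrow> (\<exists>F. countable F \<and> (\<forall>N\<in>F. nowhere_dense N) \<and> S \<subseteq> \<Union>F)"

definition classifier :: "(real^'n) set set \<Rightarrow> (real^'n) set \<Rightarrow> bool" where
  "classifier P R \<longleftrightarrow>
     R \<in> P \<and> \<Union>P = UNIV \<and>
     (\<forall>A\<in>P. \<forall>B\<in>P. A \<noteq> B \<longrightarrow> A \<inter> B = {}) \<and>
     (\<forall>A\<in>P. A \<noteq> R \<longrightarrow> A \<noteq> {}) \<and>
     meagre R \<and> R \<in> null_sets lebesgue"


definition cell :: "'a set set \<Rightarrow> 'a \<Rightarrow> 'a set" where
  "cell P x = (THE A. A \<in> P \<and> x \<in> A)"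

definition anchor :: "(real^'n) set set \<Rightarrow> real^'n \<Rightarrow> real^'n \<Rightarrow> real \<Rightarrow> bool" where
  "anchor P x c r \<longleftrightarrow> x \<in> ball c r \<and> ball c r \<subseteq> cell P x"

definition infinite_coverage :: "(real^'n) set set \<Rightarrow> real^'n \<Rightarrow> bool" where
  "infinite_coverage P x \<longleftrightarrow>
     (\<exists>c r. (\<forall>k::nat. anchor P x (c k) (r k)) \<and> \<not> bdd_above (range r))"

end

theory Submission
  imports Defs
begin

text \<open>Let x lie in balls B(c k, r k) inside P(x) with r k unbounded. Pass to a subsequence
  along which r k tends to infinity and the unit directions from x to c k converge to some l.
  A ball containing x whose centre lies in direction u from x swallows every point y with
  u \<bullet> (y - x) > 0 once its radius is large compared with norm (y - x) and 1 / (u \<bullet> (y - x)).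
  Hence P(x) contains the open halfspace l \<bullet> (y - x) > 0, whose boundary passes through x.\<close>

lemma dist_lt_if_large_ball_towards:
  fixes c x y u :: "'a::real_inner"
  assumes "dist c x < r" and "c - x = norm (c - x) *\<^sub>R u"
    and "0 < t" and "t \<le> u \<bullet> (y - x)"
    and "norm (y - x) + norm (y - x)^2 / t \<le> r"
  shows "dist c y < r"
proof -
  define d where "d = norm (c - x)"
  define w where "w = y - x"
  have "d < r" using assms(1) by (simp add: d_def dist_norm)
  show ?thesis
  proof (cases "d + norm w < r")
    case True
    have "dist c y \<le> d + norm w"
      using norm_triangle_ineq4[of "c - x" w] by (simp add: d_def w_def dist_norm)
    with True show ?thesis by linarith
  next
    case False
    have w2: "norm w ^ 2 / t \<le> r - norm w" using assms(5) by (simp add: w_def)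
    then have "norm w ^ 2 \<le> (r - norm w) * t"
      using \<open>0 < t\<close> by (simp add: divide_le_eq)
    also have "\<dots> \<le> d * (u \<bullet> w)"
    proof (rule mult_mono)
      show "r - norm w \<le> d" using False by linarith
      show "t \<le> u \<bullet> w" using assms(4) by (simp add: w_def)
      show "0 \<le> d" by (simp add: d_def)
      show "0 \<le> t" using \<open>0 < t\<close> by simp
    qed
    also have "\<dots> = (c - x) \<bullet> w"
      using arg_cong[OF assms(2), of "\<lambda>v. v \<bullet> w"] by (simp add: d_def)
    finally have key: "norm w ^ 2 \<le> (c - x) \<bullet> w" .
    have "(dist c y)^2 = d^2 - 2 * ((c - x) \<bullet> w) + norm w ^ 2"
      by (simp add: dist_norm d_def w_def power2_norm_eq_inner algebra_simps inner_commute)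
    also have "\<dots> \<le> d^2" using key zero_le_power2[of "norm w"] by linarith
    also have "\<dots> < r^2" using \<open>d < r\<close> by (simp add: d_def power_strict_mono)
    finally have "(dist c y)^2 < r^2" .
    moreover have "0 \<le> r" using \<open>d < r\<close> norm_ge_zero[of "c - x"] unfolding d_def by linarith
    ultimately show ?thesis by (rule power_less_imp_less_base)
  qed
qed

lemma halfspace_subset_if_unbounded_balls:
  fixes S :: "'a::euclidean_space set"
  assumes balls: "\<And>k. x \<in> ball (c k) (r k) \<and> ball (c k) (r k) \<subseteq> S"
    and unbounded: "\<not> bdd_above (range r)"
  shows "\<exists>l. l \<noteq> 0 \<and> {y. l \<bullet> x < l \<bullet> y} \<subseteq> S"
proof -
  have "\<exists>k. real m \<le> r k" for m :: nat
  proof (rule ccontr)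
    assume "\<nexists>k. real m \<le> r k"
    then have "r k \<le> real m" for k by (simp add: not_le less_imp_le)
    then have "bdd_above (range r)" using bdd_aboveI2[of UNIV r "real m"] by simp
    with unbounded show False ..
  qed
  then obtain g where g: "\<And>m. real m \<le> r (g m)" by metis
  obtain e :: 'a where e: "norm e = 1" using vector_choose_size[of 1] by auto
  define u where "u k = (if c k = x then e else sgn (c k - x))" for k
  have u_sphere: "\<forall>m. u (g m) \<in> sphere 0 1" using e by (simp add: u_def norm_sgn)
  have c_dir: "c k - x = norm (c k - x) *\<^sub>R u k" for k
    by (simp add: u_def sgn_div_norm)
  obtain l h where l: "l \<in> sphere 0 1" and h: "strict_mono (h :: nat \<Rightarrow> nat)"
    and "((\<lambda>m. u (g m)) \<circ> h) \<longlonglongrightarrow> l"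
    using seq_compactE[OF compact_imp_seq_compact[OF compact_sphere] u_sphere] by blast
  then have u_lim: "(\<lambda>j. u (g (h j))) \<longlonglongrightarrow> l" by (simp add: o_def)
  have r_lim: "filterlim (\<lambda>j. r (g (h j))) at_top sequentially"
  proof -
    have "filterlim (\<lambda>m. r (g m)) at_top sequentially"
      using g by (intro filterlim_at_top_mono[OF filterlim_real_sequentially]) auto
    then show ?thesis by (rule filterlim_compose[OF _ filterlim_subseq[OF h]])
  qed
  have "y \<in> S" if "l \<bullet> x < l \<bullet> y" for y
  proof -
    define t where "t = l \<bullet> (y - x) / 2"
    have "0 < t" using that by (simp add: t_def inner_diff_right)
    have "(\<lambda>j. u (g (h j)) \<bullet> (y - x)) \<longlonglongrightarrow> 2 * t"
      using tendsto_inner[OF u_lim tendsto_const] by (simp add: t_def)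
    then have ev_dir: "\<forall>\<^sub>F j in sequentially. t < u (g (h j)) \<bullet> (y - x)"
      using \<open>0 < t\<close> by (intro order_tendstoD(1)) auto
    have ev_rad: "\<forall>\<^sub>F j in sequentially. norm (y - x) + norm (y - x)^2 / t \<le> r (g (h j))"
      using r_lim by (simp add: filterlim_at_top)
    obtain j where dir: "t < u (g (h j)) \<bullet> (y - x)"
      and rad: "norm (y - x) + norm (y - x)^2 / t \<le> r (g (h j))"
      using eventually_happens'[OF sequentially_bot eventually_conj[OF ev_dir ev_rad]] by blast
    define k where "k = g (h j)"
    have "dist (c k) x < r k" using balls[of k] by (simp add: dist_commute)
    then have "dist (c k) y < r k"
      using dist_lt_if_large_ball_towards[OF _ c_dir \<open>0 < t\<close>] dir rad
      by (simp add: k_def less_imp_le)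
    then show ?thesis using balls[of k] by (simp add: subset_iff dist_commute)
  qed
  moreover have "l \<noteq> 0" using l by auto
  ultimately show ?thesis by blast
qed

theorem lemma2:
  fixes P :: "(real^'n) set set" and R :: "(real^'n) set" and x :: "real^'n"
  assumes "classifier P R"
    and "infinite_coverage P x"
  shows "\<exists>a b. a \<noteq> 0 \<and> {y. a \<bullet> y > b} \<subseteq> cell P x \<and> x \<in> frontier {y. a \<bullet> y > b}"
proof -
  obtain c r where anchors: "\<forall>k::nat. anchor P x (c k) (r k)" and "\<not> bdd_above (range r)"
    using assms(2) unfolding infinite_coverage_def by auto
  moreover have "x \<in> ball (c k) (r k) \<and> ball (c k) (r k) \<subseteq> cell P x" for k
    using anchors unfolding anchor_def by simp
  ultimately obtain l where "l \<noteq> 0" and "{y. l \<bullet> x < l \<bullet> y} \<subseteq> cell P x"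
    using halfspace_subset_if_unbounded_balls by metis
  moreover have "x \<in> frontier {y. l \<bullet> x < l \<bullet> y}"
    using frontier_halfspace_gt[of l "l \<bullet> x"] \<open>l \<noteq> 0\<close> by simp
  ultimately show ?thesis by (intro exI[of _ l] exI[of _ "l \<bullet> x"]) simp
qed

end
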